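(* Let $n\ge 1$ and let $P=P_1\otimes\cdots\otimes P_n\in\mathcal{P}_n$ satisfy $P^2=I$ and $P\neq\pm I$. Then there exists a unique $Z$-circuit $L$ on $n$ qubits such that $L\bullet P=Z\otimes I\otimes\cdots\otimes I$.
   Context: Matrices: $X=\begin{bmatrix}0&1\\1&0\end{bmatrix}$, $Z=\begin{bmatrix}1&0\\0&-1\end{bmatrix}$, $H=\frac{1}{\sqrt2}\begin{bmatrix}1&1\\1&-1\end{bmatrix}$, $CZ=\mathrm{diag}(1,1,1,-1)$. Operators on $n$ qubits act on $(\mathbb{R}^2)^{\otimes n}$, qubit $1$ being the first tensor factor; a one-qubit gate on qubit $i$, or a two-qubit gate on qubits $i,i+1$ (with qubit $i$ the first tensor factor of the gate, called its upper qubit, and $i+1$ its lower qubit), denotes that matrix tensored with identities on the other qubits. For matrices $C,P$, $C\bullet P=CPC^{-1}$. Real Pauli group: $\mathcal{P}_n=\{\pm(P_1\otimes\cdots\otimes P_n)\mid P_i\in\{I,X,Z,XZ\}\}$. A circuit is a finite sequence of gates $g_1,\dots,g_k$ ($g_1$ applied first); its operator is $g_k\cdots g_1$, and we write $L\bullet P$ for (operator of $L$)$\bullet P$. Derived generators (formal symbols, each with a defining gate sequence; within a two-qubit symbol, subscript $1$ is the upper and $2$ the lower qubit; gates separated by commas, ";" separates steps): $A_1$ = empty, $A_2$ = $H$, $A_3$ = empty; $C_1$ = empty, $C_2$ = $H;Z;H$ (i.e. $X$); $B_1=B_5$ = $H_2;\,CZ;\,H_1,H_2;\,CZ;\,H_1,H_2;\,CZ$;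 $B_2=B_6$ = $CZ;\,H_1,H_2;\,CZ$; $B_3=B_7$ = $H_1;\,CZ;\,H_1,H_2;\,CZ$; $B_4=B_8$ = $H_2;\,CZ;\,H_2;\,CZ;\,H_1,H_2;\,CZ$. Symbols with equal defining sequences (e.g. $A_1,A_3$, or $B_1,B_5$) are nevertheless distinct symbols. Types: each of these symbols carries types from $\{\text{single},\text{double}\}$: $A_1,A_2$ have output type single and $A_3$ output type double; $B_j$ has an input type (on its lower qubit) and an output type (on its upper qubit): $B_1,B_2,B_3$ single$\to$single, $B_4$ single$\to$double, $B_5,B_6,B_7$ double$\to$double, $B_8$ double$\to$single; $C_1,C_2$ have input type single. A $Z$-circuit on $n$ qubits is a sequence of symbols of the following form: for some $m\in\{1,\dots,n\}$, a symbol $A_a$ on qubit $m$, then $B_{b_{m-1}}$ on qubits $m-1,m$, then $B_{b_{m-2}}$ on qubits $m-2,m-1$, ..., then $B_{b_1}$ on qubits $1,2$, then $C_c$ on qubit $1$, such that the input type of each $B$ or $C$ symbol equals the output type of the symbol immediately preceding it in this sequence. Two $Z$-circuits are equal when they have the same $m$ and the same sequence of symbols. *)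

theory Defs
  imports "Jordan_Normal_Form.Matrix"
begin

definition kron :: "real mat \<Rightarrow> real mat \<Rightarrow> real mat" where
  "kron A B = mat (dim_row A * dim_row B) (dim_col A * dim_col B)
     (\<lambda>(i,j). A $$ (i div dim_row B, j div dim_col B) * B $$ (i mod dim_row B, j mod dim_col B))"

definition Xm :: "real mat" where "Xm = mat_of_rows_list 2 [[0,1],[1,0]]"
definition Zm :: "real mat" where "Zm = mat_of_rows_list 2 [[1,0],[0,-1]]"
definition Hm :: "real mat" where
  "Hm = mat_of_rows_list 2 [[1/sqrt 2, 1/sqrt 2],[1/sqrt 2, -1/sqrt 2]]"
definition CZm :: "real mat" where
  "CZm = mat_of_rows_list 4 [[1,0,0,0],[0,1,0,0],[0,0,1,0],[0,0,0,-1]]"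

fun tensor_list :: "real mat list \<Rightarrow> real mat" where
  "tensor_list [] = 1\<^sub>m 1"
| "tensor_list (P # Ps) = kron P (tensor_list Ps)"

definition pauli_group :: "nat \<Rightarrow> real mat set" where
  "pauli_group n = {smult_mat s (tensor_list Ps) | s Ps.
      s \<in> {1, -1} \<and> length Ps = n \<and> set Ps \<subseteq> {1\<^sub>m 2, Xm, Zm, Xm * Zm}}"

definition inv_mat :: "real mat \<Rightarrow> real mat" where
  "inv_mat C = (SOME D. D \<in> carrier_mat (dim_row C) (dim_row C) \<and>
      C * D = 1\<^sub>m (dim_row C) \<and> D * C = 1\<^sub>m (dim_row C))"

definition conj_mat :: "real mat \<Rightarrow> real mat \<Rightarrow> real mat" where
  "conj_mat C P = C * P * inv_mat C"

text \<open>Qubits are numbered 1..n. GH i / GZ i: one-qubit gate on qubit i;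
  GCZ i: CZ on qubits i (upper) and i+1 (lower).\<close>
datatype gate = GH nat | GZ nat | GCZ nat

fun gate_mat :: "nat \<Rightarrow> gate \<Rightarrow> real mat" where
  "gate_mat n (GH i) = kron (kron (1\<^sub>m (2^(i-1))) Hm) (1\<^sub>m (2^(n-i)))"
| "gate_mat n (GZ i) = kron (kron (1\<^sub>m (2^(i-1))) Zm) (1\<^sub>m (2^(n-i)))"
| "gate_mat n (GCZ i) = kron (kron (1\<^sub>m (2^(i-1))) CZm) (1\<^sub>m (2^(n-i-1)))"

text \<open>Operator of circuit g_1,...,g_k (g_1 applied first) is g_k \<dots> g_1.\<close>
definition circuit_op :: "nat \<Rightarrow> gate list \<Rightarrow> real mat" where
  "circuit_op n gs = fold (\<lambda>g M. gate_mat n g * M) gs (1\<^sub>m (2^n))"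

datatype asym = A1 | A2 | A3
datatype bsym = B1 | B2 | B3 | B4 | B5 | B6 | B7 | B8
datatype csym = C1 | C2

datatype ty = Single | Double

fun a_out :: "asym \<Rightarrow> ty" where
  "a_out A1 = Single" | "a_out A2 = Single" | "a_out A3 = Double"

fun b_in :: "bsym \<Rightarrow> ty" where
  "b_in B1 = Single" | "b_in B2 = Single" | "b_in B3 = Single" | "b_in B4 = Single"
| "b_in B5 = Double" | "b_in B6 = Double" | "b_in B7 = Double" | "b_in B8 = Double"

fun b_out :: "bsym \<Rightarrow> ty" where
  "b_out B1 = Single" | "b_out B2 = Single" | "b_out B3 = Single" | "b_out B4 = Double"
| "b_out B5 = Double" | "b_out B6 = Double" | "b_out B7 = Double" | "b_out B8 = Single"

fun c_in :: "csym \<Rightarrow> ty" where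
  "c_in C1 = Single" | "c_in C2 = Single"

text \<open>Defining gate sequences; A and C on qubit q, B on qubits i (upper), i+1 (lower).\<close>
fun a_gates :: "asym \<Rightarrow> nat \<Rightarrow> gate list" where
  "a_gates A1 q = []" | "a_gates A2 q = [GH q]" | "a_gates A3 q = []"

fun c_gates :: "csym \<Rightarrow> nat \<Rightarrow> gate list" where
  "c_gates C1 q = []" | "c_gates C2 q = [GH q, GZ q, GH q]"

fun b_gates :: "bsym \<Rightarrow> nat \<Rightarrow> gate list" where
  "b_gates B1 i = [GH (i+1), GCZ i, GH i, GH (i+1), GCZ i, GH i, GH (i+1), GCZ i]"
| "b_gates B5 i = [GH (i+1), GCZ i, GH i, GH (i+1), GCZ i, GH i, GH (i+1), GCZ i]"
| "b_gates B2 i = [GCZ i, GH i, GH (i+1), GCZ i]"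
| "b_gates B6 i = [GCZ i, GH i, GH (i+1), GCZ i]"
| "b_gates B3 i = [GH i, GCZ i, GH i, GH (i+1), GCZ i]"
| "b_gates B7 i = [GH i, GCZ i, GH i, GH (i+1), GCZ i]"
| "b_gates B4 i = [GH (i+1), GCZ i, GH (i+1), GCZ i, GH i, GH (i+1), GCZ i]"
| "b_gates B8 i = [GH (i+1), GCZ i, GH (i+1), GCZ i, GH i, GH (i+1), GCZ i]"

text \<open>A Z-circuit: ZC m a bs c stands for A_a on qubit m, then bs!0 on qubits m-1,m,
  bs!1 on qubits m-2,m-1, ..., bs!(m-2) on qubits 1,2, then C_c on qubit 1.\<close>
datatype zcirc = ZC nat asym "bsym list" csym

fun types_ok :: "ty \<Rightarrow> bsym list \<Rightarrow> csym \<Rightarrow> bool" where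
  "types_ok t [] c = (c_in c = t)"
| "types_ok t (b # bs) c = (b_in b = t \<and> types_ok (b_out b) bs c)"

fun is_zcircuit :: "nat \<Rightarrow> zcirc \<Rightarrow> bool" where
  "is_zcircuit n (ZC m a bs c) =
     (1 \<le> m \<and> m \<le> n \<and> length bs = m - 1 \<and> types_ok (a_out a) bs c)"

fun zcirc_gates :: "zcirc \<Rightarrow> gate list" where
  "zcirc_gates (ZC m a bs c) =
     a_gates a m @ concat (map (\<lambda>k. b_gates (bs ! k) (m - 1 - k)) [0..<length bs]) @ c_gates c 1"

definition zcirc_op :: "nat \<Rightarrow> zcirc \<Rightarrow> real mat" where
  "zcirc_op n L = circuit_op n (zcirc_gates L)"

end

theory Submission
  imports Defs
begin

text \<open>The gates \<open>H\<close>, \<open>Z\<close> and \<open>CZ\<close> are involutions that map signed Pauli strings to signed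
  Pauli strings, acting on one or two letters by a small table; so \<open>L \<bullet> P\<close> can be computed
  letter by letter, and the theorem becomes a statement about words. For \<open>L \<bullet> P\<close> to be
  \<open>Z \<otimes> I \<otimes> \<dots> \<otimes> I\<close>, the symbol \<open>A\<close> has to sit on the last qubit carrying a non-identity
  letter and turn that letter into \<open>Z\<close> (type single) or \<open>Y = XZ\<close> (type double). Each \<open>B\<close> then
  has to clear its lower qubit while passing \<open>Z\<close> or \<open>Y\<close> upwards, and the letter it meets on its
  upper qubit leaves exactly one admissible choice; \<open>C\<close> finally fixes the sign. Since \<open>Y\<close> is
  the only letter squaring to \<open>-I\<close>, the hypothesis \<open>P\<^sup>2 = I\<close> says the number of \<open>Y\<close>'s is even,
  which is exactly what makes the type arriving at qubit 1 single, as \<open>C\<close> requires.\<close>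

section \<open>Kronecker products\<close>

lemma sum_lessThan_mult_nat:
  "sum h {..<A * B :: nat} = (\<Sum>i<A. \<Sum>j<B. h (j + i * B))"
  unfolding sum.nat_group[of h B A, symmetric]
proof (rule sum.cong, simp, rule sum.reindex_cong)
  fix i
  show "inj_on (\<lambda>j. j + i * B) {..<B}" by (auto intro!: inj_onI)
  show "{i * B..<i * B + B} = (\<lambda>j. j + i * B) ` {..<B}"
  proof safe
    fix j assume "j \<in> {i * B..<i * B + B}"
    then show "j \<in> (\<lambda>j. j + i * B) ` {..<B}"
      by (auto intro!: image_eqI[of _ _ "j - i * B"])
  qed simp
qed simp

lemma kron_dim [simp]:
  "dim_row (kron A B) = dim_row A * dim_row B"
  "dim_col (kron A B) = dim_col A * dim_col B"
  by (simp_all add: kron_def)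

lemma kron_carrier:
  "A \<in> carrier_mat ra ca \<Longrightarrow> B \<in> carrier_mat rb cb \<Longrightarrow> kron A B \<in> carrier_mat (ra * rb) (ca * cb)"
  unfolding carrier_mat_def by simp

lemma kron_index:
  "i < dim_row A * dim_row B \<Longrightarrow> j < dim_col A * dim_col B \<Longrightarrow>
   kron A B $$ (i, j) = A $$ (i div dim_row B, j div dim_col B) * B $$ (i mod dim_row B, j mod dim_col B)"
  by (simp add: kron_def)

lemma kron_mat:
  "kron (mat a b f) (mat c d g) =
   mat (a * c) (b * d) (\<lambda>(i, j). f (i div c, j div d) * g (i mod c, j mod d))"
proof (rule eq_matI)
  fix i j assume "i < dim_row (mat (a * c) (b * d) (\<lambda>(i, j). f (i div c, j div d) * g (i mod c, j mod d)))"
    "j < dim_col (mat (a * c) (b * d) (\<lambda>(i, j). f (i div c, j div d) * g (i mod c, j mod d)))"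
  then have i: "i < a * c" and j: "j < b * d" by auto
  then have "c > 0" "d > 0" by (auto intro: gr0I)
  with i j show "kron (mat a b f) (mat c d g) $$ (i, j) =
      mat (a * c) (b * d) (\<lambda>(i, j). f (i div c, j div d) * g (i mod c, j mod d)) $$ (i, j)"
    by (simp add: kron_index less_mult_imp_div_less)
qed auto

lemma kron_mult:
  assumes A: "A \<in> carrier_mat ra ca" and B: "B \<in> carrier_mat rb cb"
    and C: "C \<in> carrier_mat ca cc" and D: "D \<in> carrier_mat cb cd"
  shows "kron A B * kron C D = kron (A * C) (B * D)"
proof (rule eq_matI)
  fix i j assume "i < dim_row (kron (A * C) (B * D))" and "j < dim_col (kron (A * C) (B * D))"
  then have i: "i < ra * rb" and j: "j < cc * cd" using A B C D by auto
  then have "rb > 0" "cd > 0" by (auto intro: gr0I)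
  then have lt: "i div rb < ra" "i mod rb < rb" "j div cd < cc" "j mod cd < cd"
    using i j by (auto simp: less_mult_imp_div_less)
  have "(kron A B * kron C D) $$ (i, j) = (\<Sum>k<ca * cb. kron A B $$ (i, k) * kron C D $$ (k, j))"
    using i j A B C D by (simp add: scalar_prod_def atLeast0LessThan)
  also have "\<dots> = (\<Sum>k<ca * cb. (A $$ (i div rb, k div cb) * B $$ (i mod rb, k mod cb)) *
                                    (C $$ (k div cb, j div cd) * D $$ (k mod cb, j mod cd)))"
    using i j A B C D by (intro sum.cong refl) (simp add: kron_index)
  also have "\<dots> = (\<Sum>x<ca. \<Sum>y<cb. (A $$ (i div rb, x) * C $$ (x, j div cd)) *
                                     (B $$ (i mod rb, y) * D $$ (y, j mod cd)))"
    unfolding sum_lessThan_mult_nat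
  proof (intro sum.cong refl)
    fix x y assume "y \<in> {..<cb}"
    then have "(y + x * cb) div cb = x" "(y + x * cb) mod cb = y" by auto
    then show "(A $$ (i div rb, (y + x * cb) div cb) * B $$ (i mod rb, (y + x * cb) mod cb)) *
               (C $$ ((y + x * cb) div cb, j div cd) * D $$ ((y + x * cb) mod cb, j mod cd)) =
               (A $$ (i div rb, x) * C $$ (x, j div cd)) * (B $$ (i mod rb, y) * D $$ (y, j mod cd))"
      by (simp only: ac_simps)
  qed
  also have "\<dots> = (\<Sum>x<ca. A $$ (i div rb, x) * C $$ (x, j div cd)) *
                   (\<Sum>y<cb. B $$ (i mod rb, y) * D $$ (y, j mod cd))"
    by (simp add: sum_product)
  also have "\<dots> = kron (A * C) (B * D) $$ (i, j)"
    using A B C D i j lt by (simp add: kron_index scalar_prod_def atLeast0LessThan)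
  finally show "(kron A B * kron C D) $$ (i, j) = kron (A * C) (B * D) $$ (i, j)" .
qed (use A B C D in auto)

lemma kron_assoc:
  assumes A: "A \<in> carrier_mat ra ca" and B: "B \<in> carrier_mat rb cb" and C: "C \<in> carrier_mat rc cc"
  shows "kron (kron A B) C = kron A (kron B C)"
proof (rule eq_matI)
  fix i j assume "i < dim_row (kron A (kron B C))" and "j < dim_col (kron A (kron B C))"
  then have i: "i < ra * (rb * rc)" and j: "j < ca * (cb * cc)" using A B C by auto
  then have pos: "rb > 0" "rc > 0" "cb > 0" "cc > 0" by (auto intro: gr0I)
  have lt: "i div rc < ra * rb" "j div cc < ca * cb" "i mod (rb * rc) < rb * rc" "j mod (cb * cc) < cb * cc"
    using i j pos by (simp_all add: less_mult_imp_div_less mult.assoc[symmetric])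
  have div_mod: "i div (rb * rc) = i div rc div rb" "j div (cb * cc) = j div cc div cb"
    by (metis div_mult2_eq mult.commute)+
  have mod_div: "i mod (rb * rc) div rc = i div rc mod rb" "i mod (rb * rc) mod rc = i mod rc"
    "j mod (cb * cc) div cc = j div cc mod cb" "j mod (cb * cc) mod cc = j mod cc"
    using pos by (simp_all add: mod_mult2_eq mult.commute[of rb rc] mult.commute[of cb cc])
  have "kron (kron A B) C $$ (i, j) = kron A B $$ (i div rc, j div cc) * C $$ (i mod rc, j mod cc)"
    using i j A B C by (simp add: kron_index mult.assoc)
  also have "\<dots> = A $$ (i div rc div rb, j div cc div cb) * B $$ (i div rc mod rb, j div cc mod cb)
                   * C $$ (i mod rc, j mod cc)"
    using lt A B by (simp add: kron_index)
  also have "\<dots> = kron A (kron B C) $$ (i, j)"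
    using i j lt A B C by (simp add: kron_index div_mod mod_div)
  finally show "kron (kron A B) C $$ (i, j) = kron A (kron B C) $$ (i, j)" .
qed (use A B C in auto)

lemma kron_one: "kron (1\<^sub>m a) (1\<^sub>m b) = 1\<^sub>m (a * b)"
proof (rule eq_matI)
  fix i j assume "i < dim_row (1\<^sub>m (a * b) :: real mat)" and "j < dim_col (1\<^sub>m (a * b) :: real mat)"
  then have i: "i < a * b" and j: "j < a * b" by auto
  then have "b > 0" by (auto intro: gr0I)
  then have "i div b < a" "j div b < a" "i mod b < b" "j mod b < b"
    using i j by (auto simp: less_mult_imp_div_less)
  moreover have "(i div b = j div b \<and> i mod b = j mod b) = (i = j)"
    by (metis div_mult_mod_eq)
  ultimately show "kron (1\<^sub>m a) (1\<^sub>m b) $$ (i, j) = 1\<^sub>m (a * b) $$ (i, j)"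
    using i j by (auto simp: kron_index)
qed auto

text \<open>Not simp rules: the simplifier rewrites \<open>1\<^sub>m 1\<close> to \<open>1\<^sub>m (Suc 0)\<close>, so these are
  supplied as instantiated facts instead.\<close>

lemma kron_one_1_left: "kron (1\<^sub>m 1) A = A"
  by (rule eq_matI) (auto simp: kron_index)

lemma kron_one_1_right: "kron A (1\<^sub>m 1) = A"
  by (rule eq_matI) (auto simp: kron_index)

lemma kron_smult_left: "kron (c \<cdot>\<^sub>m A) B = c \<cdot>\<^sub>m kron A B"
  by (rule eq_matI) (auto simp: kron_index less_mult_imp_div_less)

lemma kron_smult_right: "kron A (c \<cdot>\<^sub>m B) = c \<cdot>\<^sub>m kron A B"
proof (rule eq_matI)
  fix i j assume "i < dim_row (c \<cdot>\<^sub>m kron A B)" "j < dim_col (c \<cdot>\<^sub>m kron A B)"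
  then have i: "i < dim_row A * dim_row B" and j: "j < dim_col A * dim_col B" by auto
  then have "dim_row B > 0" "dim_col B > 0" by (auto intro: gr0I)
  then have "i mod dim_row B < dim_row B" "j mod dim_col B < dim_col B" by simp_all
  with i j show "kron A (c \<cdot>\<^sub>m B) $$ (i, j) = (c \<cdot>\<^sub>m kron A B) $$ (i, j)"
    by (simp add: kron_index)
qed auto

lemma kron_local_conj:
  assumes A: "A \<in> carrier_mat p p" and B: "B \<in> carrier_mat q q"
    and G: "G \<in> carrier_mat d d" and M: "M \<in> carrier_mat d d"
  shows "kron (kron (1\<^sub>m p) G) (1\<^sub>m q) * kron (kron A M) B * kron (kron (1\<^sub>m p) G) (1\<^sub>m q) =
         kron (kron A (G * M * G)) B"
proof -
  have "kron (kron (1\<^sub>m p) G) (1\<^sub>m q) * kron (kron A M) B = kron (kron (1\<^sub>m p) G * kron A M) (1\<^sub>m q * B)"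
    using A B G M by (intro kron_mult[where ca = "p * d" and cb = q]) (auto intro: kron_carrier)
  also have "kron (1\<^sub>m p) G * kron A M = kron A (G * M)"
    using A G M by (subst kron_mult[where ca = p and cb = d]) auto
  finally have left: "kron (kron (1\<^sub>m p) G) (1\<^sub>m q) * kron (kron A M) B = kron (kron A (G * M)) B"
    using B by simp
  have "kron (kron A (G * M)) B * kron (kron (1\<^sub>m p) G) (1\<^sub>m q) =
        kron (kron A (G * M) * kron (1\<^sub>m p) G) (B * 1\<^sub>m q)"
    using A B G M by (intro kron_mult[where ca = "p * d" and cb = q]) (auto intro: kron_carrier)
  also have "kron A (G * M) * kron (1\<^sub>m p) G = kron A (G * M * G)"
    using A G M by (subst kron_mult[where ca = p and cb = d]) auto
  finally show ?thesis using left B by simp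
qed

lemma kron_eq_imp_block_eq:
  assumes A: "A \<in> carrier_mat r c" and B: "B \<in> carrier_mat k l"
    and C: "C \<in> carrier_mat r c" and D: "D \<in> carrier_mat k l"
    and eq: "kron A B = kron C D" and u: "u < r" and v: "v < c"
  shows "A $$ (u, v) \<cdot>\<^sub>m B = C $$ (u, v) \<cdot>\<^sub>m D"
proof (rule eq_matI)
  fix i j assume "i < dim_row (C $$ (u, v) \<cdot>\<^sub>m D)" "j < dim_col (C $$ (u, v) \<cdot>\<^sub>m D)"
  then have i: "i < k" and j: "j < l" using D by auto
  have "Suc u * k \<le> r * k" "Suc v * l \<le> c * l"
    using u v by (simp_all add: mult_le_mono1 del: mult_Suc)
  then have lt: "u * k + i < r * k" "v * l + j < c * l"
    using i j by simp_all
  have div_mod: "(u * k + i) div k = u" "(u * k + i) mod k = i" "(v * l + j) div l = v" "(v * l + j) mod l = j"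
    using i j by auto
  have "kron A B $$ (u * k + i, v * l + j) = kron C D $$ (u * k + i, v * l + j)" using eq by simp
  then show "(A $$ (u, v) \<cdot>\<^sub>m B) $$ (i, j) = (C $$ (u, v) \<cdot>\<^sub>m D) $$ (i, j)"
    using A B C D lt i j by (simp add: kron_index div_mod)
qed (use B D in auto)

section \<open>One-qubit Pauli matrices and their conjugation tables\<close>

lemma less_2_nat_iff: "(i::nat) < 2 \<longleftrightarrow> i = 0 \<or> i = 1"
  by auto

lemma less_4_nat_iff: "(i::nat) < 4 \<longleftrightarrow> i = 0 \<or> i = 1 \<or> i = 2 \<or> i = 3"
  by (simp add: eval_nat_numeral less_Suc_eq)

lemma Xm_carrier [simp]: "Xm \<in> carrier_mat 2 2"
  unfolding Xm_def mat_of_rows_list_def by (simp add: eval_nat_numeral)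

lemma Zm_carrier [simp]: "Zm \<in> carrier_mat 2 2"
  unfolding Zm_def mat_of_rows_list_def by (simp add: eval_nat_numeral)

lemma Hm_carrier [simp]: "Hm \<in> carrier_mat 2 2"
  unfolding Hm_def mat_of_rows_list_def by (simp add: eval_nat_numeral)

lemma CZm_carrier [simp]: "CZm \<in> carrier_mat 4 4"
  unfolding CZm_def mat_of_rows_list_def by (simp add: eval_nat_numeral)

lemma Xm_index [simp]:
  "Xm $$ (0, 0) = 0" "Xm $$ (0, Suc 0) = 1" "Xm $$ (Suc 0, 0) = 1" "Xm $$ (Suc 0, Suc 0) = 0"
  by (simp_all add: Xm_def mat_of_rows_list_def)

lemma Zm_index [simp]:
  "Zm $$ (0, 0) = 1" "Zm $$ (0, Suc 0) = 0" "Zm $$ (Suc 0, 0) = 0" "Zm $$ (Suc 0, Suc 0) = -1"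
  by (simp_all add: Zm_def mat_of_rows_list_def)

lemma Hm_index [simp]:
  "Hm $$ (0, 0) = 1 / sqrt 2" "Hm $$ (0, Suc 0) = 1 / sqrt 2"
  "Hm $$ (Suc 0, 0) = 1 / sqrt 2" "Hm $$ (Suc 0, Suc 0) = - 1 / sqrt 2"
  by (simp_all add: Hm_def mat_of_rows_list_def)

lemma CZm_index:
  "i < 4 \<Longrightarrow> j < 4 \<Longrightarrow> CZm $$ (i, j) = (if i = j then if i = 3 then -1 else 1 else 0)"
  unfolding less_4_nat_iff CZm_def mat_of_rows_list_def by (auto simp: eval_nat_numeral)

lemma mat2_eqI:
  assumes "A \<in> carrier_mat 2 2" "B \<in> carrier_mat 2 2"
    and "A $$ (0, 0) = B $$ (0, 0)" "A $$ (0, Suc 0) = B $$ (0, Suc 0)"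
    and "A $$ (Suc 0, 0) = B $$ (Suc 0, 0)" "A $$ (Suc 0, Suc 0) = B $$ (Suc 0, Suc 0)"
  shows "A = B"
  using assms by (intro eq_matI) (auto simp: less_2_nat_iff)

lemma mat2_mult_carrier [simp]: "A \<in> carrier_mat 2 2 \<Longrightarrow> B \<in> carrier_mat 2 2 \<Longrightarrow> A * B \<in> carrier_mat 2 2"
  by (rule mult_carrier_mat)

lemma one_mat_2_index [simp]:
  "(1\<^sub>m 2 :: real mat) $$ (0, 0) = 1" "(1\<^sub>m 2 :: real mat) $$ (0, Suc 0) = 0"
  "(1\<^sub>m 2 :: real mat) $$ (Suc 0, 0) = 0" "(1\<^sub>m 2 :: real mat) $$ (Suc 0, Suc 0) = 1"
  by simp_all

lemma mat2_smult_index [simp]: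
  assumes "A \<in> carrier_mat 2 2"
  shows "(c \<cdot>\<^sub>m A) $$ (0, 0) = c * A $$ (0, 0)" "(c \<cdot>\<^sub>m A) $$ (0, Suc 0) = c * A $$ (0, Suc 0)"
    "(c \<cdot>\<^sub>m A) $$ (Suc 0, 0) = c * A $$ (Suc 0, 0)" "(c \<cdot>\<^sub>m A) $$ (Suc 0, Suc 0) = c * A $$ (Suc 0, Suc 0)"
  using assms by auto

lemma mat2_mult_index [simp]:
  assumes "A \<in> carrier_mat 2 2" "B \<in> carrier_mat 2 2"
  shows "(A * B) $$ (0, 0) = A $$ (0, 0) * B $$ (0, 0) + A $$ (0, Suc 0) * B $$ (Suc 0, 0)"
    "(A * B) $$ (0, Suc 0) = A $$ (0, 0) * B $$ (0, Suc 0) + A $$ (0, Suc 0) * B $$ (Suc 0, Suc 0)"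
    "(A * B) $$ (Suc 0, 0) = A $$ (Suc 0, 0) * B $$ (0, 0) + A $$ (Suc 0, Suc 0) * B $$ (Suc 0, 0)"
    "(A * B) $$ (Suc 0, Suc 0) = A $$ (Suc 0, 0) * B $$ (0, Suc 0) + A $$ (Suc 0, Suc 0) * B $$ (Suc 0, Suc 0)"
  using assms by (simp_all add: scalar_prod_def numeral_2_eq_2)

text \<open>\<open>PY\<close> stands for the real matrix \<open>X Z\<close>, i.e.\ \<open>-i\<close> times the usual Pauli \<open>Y\<close>.\<close>

datatype pauli = PI | PX | PZ | PY

fun pauli_mat :: "pauli \<Rightarrow> real mat" where
  "pauli_mat PI = 1\<^sub>m 2"
| "pauli_mat PX = Xm"
| "pauli_mat PZ = Zm"
| "pauli_mat PY = Xm * Zm"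

lemma pauli_mat_carrier [simp]: "pauli_mat x \<in> carrier_mat 2 2"
  by (cases x) auto

lemma pauli_mat_dim [simp]: "dim_row (pauli_mat x) = 2" "dim_col (pauli_mat x) = 2"
  by (rule carrier_matD[OF pauli_mat_carrier])+

definition sign_of :: "bool \<Rightarrow> real" where
  "sign_of b = (if b then -1 else 1)"

lemma smult_one_mat [simp]: "(1::real) \<cdot>\<^sub>m A = A"
  by (rule eq_matI) auto

lemma sign_of_mult: "sign_of a * sign_of b = sign_of (a \<noteq> b)"
  by (simp add: sign_of_def)

text \<open>Each table returns the sign flip and the resulting letter(s) of \<open>G P G\<close>.\<close>

fun h_conj :: "pauli \<Rightarrow> bool \<times> pauli" where
  "h_conj PI = (False, PI)" | "h_conj PX = (False, PZ)" | "h_conj PZ = (False, PX)" | "h_conj PY = (True, PY)"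

fun z_conj :: "pauli \<Rightarrow> bool \<times> pauli" where
  "z_conj PI = (False, PI)" | "z_conj PX = (True, PX)" | "z_conj PZ = (False, PZ)" | "z_conj PY = (True, PY)"

fun cz_conj :: "pauli \<Rightarrow> pauli \<Rightarrow> bool \<times> pauli \<times> pauli" where
  "cz_conj PI PI = (False, PI, PI)" | "cz_conj PI PX = (False, PZ, PX)"
| "cz_conj PI PZ = (False, PI, PZ)" | "cz_conj PI PY = (False, PZ, PY)"
| "cz_conj PX PI = (False, PX, PZ)" | "cz_conj PX PX = (True, PY, PY)"
| "cz_conj PX PZ = (False, PX, PI)" | "cz_conj PX PY = (True, PY, PX)"
| "cz_conj PZ PI = (False, PZ, PI)" | "cz_conj PZ PX = (False, PI, PX)"
| "cz_conj PZ PZ = (False, PZ, PZ)" | "cz_conj PZ PY = (False, PI, PY)"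
| "cz_conj PY PI = (False, PY, PZ)" | "cz_conj PY PX = (True, PX, PY)"
| "cz_conj PY PZ = (False, PY, PI)" | "cz_conj PY PY = (True, PX, PX)"

lemma Hm_conj_pauli: "Hm * pauli_mat x * Hm = sign_of (fst (h_conj x)) \<cdot>\<^sub>m pauli_mat (snd (h_conj x))"
proof -
  have "(1 / sqrt 2) * (1 / sqrt 2) = (1 / 2 :: real)"
    by (simp add: field_simps)
  then show ?thesis
    by (cases x) (auto intro!: mat2_eqI simp: sign_of_def field_simps)
qed

lemma Zm_conj_pauli: "Zm * pauli_mat x * Zm = sign_of (fst (z_conj x)) \<cdot>\<^sub>m pauli_mat (snd (z_conj x))"
  by (cases x) (auto intro!: mat2_eqI simp: sign_of_def)

lemma Hm_involution: "Hm * Hm = 1\<^sub>m 2"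
  using Hm_conj_pauli[of PI] right_mult_one_mat[OF Hm_carrier] by (simp add: sign_of_def)

lemma Zm_involution: "Zm * Zm = 1\<^sub>m 2"
  using Zm_conj_pauli[of PI] right_mult_one_mat[OF Zm_carrier] by (simp add: sign_of_def)

lemma pauli_mat_square: "pauli_mat x * pauli_mat x = sign_of (x = PY) \<cdot>\<^sub>m 1\<^sub>m 2"
  by (cases x) (auto intro!: mat2_eqI simp: sign_of_def)

fun pauli_entry :: "pauli \<Rightarrow> nat \<Rightarrow> nat \<Rightarrow> real" where
  "pauli_entry PI i j = (if i = j then 1 else 0)"
| "pauli_entry PX i j = (if i \<noteq> j then 1 else 0)"
| "pauli_entry PZ i j = (if i = j then if i = 0 then 1 else -1 else 0)"
| "pauli_entry PY i j = (if i \<noteq> j then if i = 0 then -1 else 1 else 0)"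

lemma pauli_mat_eq_mat: "pauli_mat x = mat 2 2 (\<lambda>(i, j). pauli_entry x i j)"
  by (cases x) (auto intro!: mat2_eqI)

lemma diag_mult_left:
  assumes "dim_row M = n"
  shows "mat n n (\<lambda>(i, j). if i = j then d i else 0) * M = mat n (dim_col M) (\<lambda>(i, j). d i * M $$ (i, j))"
proof (rule eq_matI)
  fix i j assume "i < dim_row (mat n (dim_col M) (\<lambda>(i, j). d i * M $$ (i, j)))"
    "j < dim_col (mat n (dim_col M) (\<lambda>(i, j). d i * M $$ (i, j)))"
  then have i: "i < n" and j: "j < dim_col M" by auto
  have "(mat n n (\<lambda>(i, j). if i = j then d i else 0) * M) $$ (i, j) =
        (\<Sum>k\<in>{0..<n}. (if i = k then d i else 0) * M $$ (k, j))"
    using assms i j by (simp add: scalar_prod_def)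
  also have "\<dots> = (\<Sum>k\<in>{0..<n}. if k = i then d i * M $$ (i, j) else 0)"
    by (rule sum.cong) auto
  finally show "(mat n n (\<lambda>(i, j). if i = j then d i else 0) * M) $$ (i, j) =
                mat n (dim_col M) (\<lambda>(i, j). d i * M $$ (i, j)) $$ (i, j)"
    using i j by simp
qed (use assms in auto)

lemma diag_mult_right:
  assumes "dim_col M = n"
  shows "M * mat n n (\<lambda>(i, j). if i = j then d i else 0) = mat (dim_row M) n (\<lambda>(i, j). M $$ (i, j) * d j)"
proof (rule eq_matI)
  fix i j assume "i < dim_row (mat (dim_row M) n (\<lambda>(i, j). M $$ (i, j) * d j))"
    "j < dim_col (mat (dim_row M) n (\<lambda>(i, j). M $$ (i, j) * d j))"
  then have i: "i < dim_row M" and j: "j < n" by auto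
  have "(M * mat n n (\<lambda>(i, j). if i = j then d i else 0)) $$ (i, j) =
        (\<Sum>k\<in>{0..<n}. M $$ (i, k) * (if k = j then d k else 0))"
    using assms i j by (simp add: scalar_prod_def)
  also have "\<dots> = (\<Sum>k\<in>{0..<n}. if k = j then M $$ (i, j) * d j else 0)"
    by (rule sum.cong) auto
  finally show "(M * mat n n (\<lambda>(i, j). if i = j then d i else 0)) $$ (i, j) =
                mat (dim_row M) n (\<lambda>(i, j). M $$ (i, j) * d j) $$ (i, j)"
    using i j by simp
qed (use assms in auto)

definition cz_diag :: "nat \<Rightarrow> real" where
  "cz_diag i = (if i = 3 then -1 else 1)"

lemma CZm_eq_diag: "CZm = mat 4 4 (\<lambda>(i, j). if i = j then cz_diag i else 0)"
  by (rule eq_matI) (use carrier_matD[OF CZm_carrier] in \<open>auto simp: CZm_index cz_diag_def\<close>)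

lemma cz_diag_conj_pauli_entry:
  "i < 4 \<Longrightarrow> j < 4 \<Longrightarrow>
   cz_diag i * (pauli_entry x (i div 2) (j div 2) * pauli_entry y (i mod 2) (j mod 2)) * cz_diag j =
   sign_of (fst (cz_conj x y)) * (pauli_entry (fst (snd (cz_conj x y))) (i div 2) (j div 2) *
                                  pauli_entry (snd (snd (cz_conj x y))) (i mod 2) (j mod 2))"
  unfolding less_4_nat_iff by (cases x; cases y; elim disjE; simp add: cz_diag_def sign_of_def)

lemma CZm_conj_pauli:
  "CZm * kron (pauli_mat x) (pauli_mat y) * CZm =
   sign_of (fst (cz_conj x y)) \<cdot>\<^sub>m kron (pauli_mat (fst (snd (cz_conj x y)))) (pauli_mat (snd (snd (cz_conj x y))))"
proof -
  have "CZm * kron (pauli_mat x) (pauli_mat y) * CZm =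
        mat 4 4 (\<lambda>(i, j). cz_diag i * kron (pauli_mat x) (pauli_mat y) $$ (i, j) * cz_diag j)"
    unfolding CZm_eq_diag by (simp add: diag_mult_left diag_mult_right) (rule eq_matI; auto)
  then show ?thesis
    unfolding pauli_mat_eq_mat kron_mat by (intro eq_matI) (auto simp: cz_diag_conj_pauli_entry)
qed

lemma CZm_involution: "CZm * CZm = 1\<^sub>m 4"
  using CZm_conj_pauli[of PI PI] kron_one[of 2 2] right_mult_one_mat[OF CZm_carrier] by (simp add: sign_of_def)

section \<open>Signed Pauli strings and the action of Clifford gates\<close>

lemma tensor_list_carrier:
  "set Ms \<subseteq> carrier_mat 2 2 \<Longrightarrow> tensor_list Ms \<in> carrier_mat (2 ^ length Ms) (2 ^ length Ms)"
proof (induction Ms)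
  case (Cons M Ms)
  then have "kron M (tensor_list Ms) \<in> carrier_mat (2 * 2 ^ length Ms) (2 * 2 ^ length Ms)"
    by (intro kron_carrier) auto
  then show ?case by simp
qed simp

lemma tensor_list_append:
  "set Ms \<subseteq> carrier_mat 2 2 \<Longrightarrow> set Ns \<subseteq> carrier_mat 2 2 \<Longrightarrow>
   tensor_list (Ms @ Ns) = kron (tensor_list Ms) (tensor_list Ns)"
proof (induction Ms)
  case (Cons M Ms)
  then have "tensor_list ((M # Ms) @ Ns) = kron M (kron (tensor_list Ms) (tensor_list Ns))" by simp
  also have "\<dots> = kron (kron M (tensor_list Ms)) (tensor_list Ns)"
    using Cons.prems tensor_list_carrier[of Ms] tensor_list_carrier[of Ns]
    by (intro kron_assoc[symmetric]) auto
  finally show ?case by simp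
qed (use kron_one_1_left in simp)

lemma tensor_list_replicate_one: "tensor_list (replicate k (1\<^sub>m 2)) = 1\<^sub>m (2 ^ k)"
  by (induction k) (simp_all add: kron_one)

abbreviation pauli_tensor :: "pauli list \<Rightarrow> real mat" where
  "pauli_tensor ps \<equiv> tensor_list (map pauli_mat ps)"

lemma pauli_mats_carrier: "set (map pauli_mat ps) \<subseteq> carrier_mat 2 2"
  by auto

lemma pauli_tensor_carrier [simp]: "pauli_tensor ps \<in> carrier_mat (2 ^ length ps) (2 ^ length ps)"
  using tensor_list_carrier[OF pauli_mats_carrier] by simp

lemma pauli_tensor_append: "pauli_tensor (ps @ qs) = kron (pauli_tensor ps) (pauli_tensor qs)"
  using tensor_list_append[OF pauli_mats_carrier pauli_mats_carrier] by simp

lemma pauli_tensor_singleton: "pauli_tensor [x] = pauli_mat x"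
  using kron_one_1_right[of "pauli_mat x"] by simp

lemma pauli_tensor_pair: "pauli_tensor [x, y] = kron (pauli_mat x) (pauli_mat y)"
  using kron_one_1_right[of "pauli_mat y"] by simp

definition pauli_string_mat :: "bool \<times> pauli list \<Rightarrow> real mat" where
  "pauli_string_mat st = sign_of (fst st) \<cdot>\<^sub>m pauli_tensor (snd st)"

lemma pauli_string_mat_carrier [simp]:
  "pauli_string_mat (s, ps) \<in> carrier_mat (2 ^ length ps) (2 ^ length ps)"
  by (simp add: pauli_string_mat_def)

lemma pauli_string_mat_dim [simp]:
  "dim_row (pauli_string_mat (s, ps)) = 2 ^ length ps" "dim_col (pauli_string_mat (s, ps)) = 2 ^ length ps"
  by (rule carrier_matD[OF pauli_string_mat_carrier])+

lemma smult_smult_mat: "a \<cdot>\<^sub>m (b \<cdot>\<^sub>m A) = (a * b :: real) \<cdot>\<^sub>m A"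
  by (rule eq_matI) auto

lemma local_gate_conj_pauli_string:
  assumes G: "G \<in> carrier_mat (2 ^ length mid) (2 ^ length mid)"
    and conj: "G * pauli_tensor mid * G = sign_of f \<cdot>\<^sub>m pauli_tensor mid'"
  shows "kron (kron (1\<^sub>m (2 ^ length pre)) G) (1\<^sub>m (2 ^ length post)) * pauli_string_mat (s, pre @ mid @ post) *
         kron (kron (1\<^sub>m (2 ^ length pre)) G) (1\<^sub>m (2 ^ length post)) =
         pauli_string_mat (s \<noteq> f, pre @ mid' @ post)"
proof -
  let ?N = "2 ^ length (pre @ mid @ post)"
  let ?g = "kron (kron (1\<^sub>m (2 ^ length pre)) G) (1\<^sub>m (2 ^ length post))"
  let ?K = "kron (kron (pauli_tensor pre) (pauli_tensor mid)) (pauli_tensor post)"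
  have g: "?g \<in> carrier_mat ?N ?N"
    using kron_carrier[OF kron_carrier[OF one_carrier_mat G] one_carrier_mat]
    by (simp add: power_add mult.assoc)
  have K: "?K \<in> carrier_mat ?N ?N"
    using kron_carrier[OF kron_carrier[OF pauli_tensor_carrier pauli_tensor_carrier] pauli_tensor_carrier]
    by (simp add: power_add mult.assoc)
  have tensor_split: "pauli_tensor (pre @ m @ post) =
      kron (kron (pauli_tensor pre) (pauli_tensor m)) (pauli_tensor post)" for m
    unfolding pauli_tensor_append by (rule sym, rule kron_assoc) (rule pauli_tensor_carrier)+
  have "?g * pauli_string_mat (s, pre @ mid @ post) * ?g = sign_of s \<cdot>\<^sub>m (?g * ?K * ?g)"
    unfolding pauli_string_mat_def tensor_split fst_conv snd_conv
    by (simp only: mult_smult_distrib[OF g K] mult_smult_assoc_mat[OF mult_carrier_mat[OF g K] g])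
  also have "?g * ?K * ?g = kron (kron (pauli_tensor pre) (G * pauli_tensor mid * G)) (pauli_tensor post)"
    using G by (intro kron_local_conj) auto
  also have "\<dots> = sign_of f \<cdot>\<^sub>m kron (kron (pauli_tensor pre) (pauli_tensor mid')) (pauli_tensor post)"
    unfolding conj by (simp add: kron_smult_left kron_smult_right)
  finally show ?thesis
    unfolding pauli_string_mat_def tensor_split fst_conv snd_conv by (simp only: smult_smult_mat sign_of_mult)
qed

fun gate_valid :: "nat \<Rightarrow> gate \<Rightarrow> bool" where
  "gate_valid n (GH i) = (1 \<le> i \<and> i \<le> n)"
| "gate_valid n (GZ i) = (1 \<le> i \<and> i \<le> n)"
| "gate_valid n (GCZ i) = (1 \<le> i \<and> i + 1 \<le> n)"

fun gate_act :: "gate \<Rightarrow> bool \<times> pauli list \<Rightarrow> bool \<times> pauli list" where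
  "gate_act (GH i) (s, ps) = (s \<noteq> fst (h_conj (ps ! (i - 1))), ps[i - 1 := snd (h_conj (ps ! (i - 1)))])"
| "gate_act (GZ i) (s, ps) = (s \<noteq> fst (z_conj (ps ! (i - 1))), ps[i - 1 := snd (z_conj (ps ! (i - 1)))])"
| "gate_act (GCZ i) (s, ps) =
    (let (f, x, y) = cz_conj (ps ! (i - 1)) (ps ! i) in (s \<noteq> f, ps[i - 1 := x, i := y]))"

lemma length_gate_act [simp]: "length (snd (gate_act g st)) = length (snd st)"
  by (cases st; cases g) (auto split: prod.split)

lemma length_fold_gate_act [simp]: "length (snd (fold gate_act gs st)) = length (snd st)"
  by (induction gs arbitrary: st) auto

lemma one_qubit_gate_conj_pauli_string:
  assumes i: "1 \<le> i" "i \<le> length ps" and G: "G \<in> carrier_mat 2 2"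
    and conj: "G * pauli_mat (ps ! (i - 1)) * G = sign_of f \<cdot>\<^sub>m pauli_mat y"
  shows "kron (kron (1\<^sub>m (2 ^ (i - 1))) G) (1\<^sub>m (2 ^ (length ps - i))) * pauli_string_mat (s, ps) *
         kron (kron (1\<^sub>m (2 ^ (i - 1))) G) (1\<^sub>m (2 ^ (length ps - i))) =
         pauli_string_mat (s \<noteq> f, ps[i - 1 := y])"
proof -
  define pre post a where "pre = take (i - 1) ps" and "post = drop i ps" and "a = ps ! (i - 1)"
  have ps: "ps = pre @ [a] @ post" and upd: "ps[i - 1 := y] = pre @ [y] @ post"
    using i id_take_nth_drop[of "i - 1" ps] upd_conv_take_nth_drop[of "i - 1" ps y]
    by (simp_all add: pre_def post_def a_def)
  have len: "length pre = i - 1" "length post = length ps - i"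
    using i by (simp_all add: pre_def post_def)
  have "G * pauli_tensor [a] * G = sign_of f \<cdot>\<^sub>m pauli_tensor [y]"
    unfolding pauli_tensor_singleton a_def by (rule conj)
  with G have "kron (kron (1\<^sub>m (2 ^ length pre)) G) (1\<^sub>m (2 ^ length post)) * pauli_string_mat (s, pre @ [a] @ post) *
      kron (kron (1\<^sub>m (2 ^ length pre)) G) (1\<^sub>m (2 ^ length post)) = pauli_string_mat (s \<noteq> f, pre @ [y] @ post)"
    by (intro local_gate_conj_pauli_string) simp_all
  then show ?thesis
    by (simp only: ps[symmetric] upd len)
qed

lemma two_qubit_gate_conj_pauli_string:
  assumes i: "1 \<le> i" "i + 1 \<le> length ps" and G: "G \<in> carrier_mat 4 4"
    and conj: "G * kron (pauli_mat (ps ! (i - 1))) (pauli_mat (ps ! i)) * G =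
               sign_of f \<cdot>\<^sub>m kron (pauli_mat x) (pauli_mat y)"
  shows "kron (kron (1\<^sub>m (2 ^ (i - 1))) G) (1\<^sub>m (2 ^ (length ps - i - 1))) * pauli_string_mat (s, ps) *
         kron (kron (1\<^sub>m (2 ^ (i - 1))) G) (1\<^sub>m (2 ^ (length ps - i - 1))) =
         pauli_string_mat (s \<noteq> f, ps[i - 1 := x, i := y])"
proof -
  define pre post a b where "pre = take (i - 1) ps" and "post = drop (i + 1) ps"
    and "a = ps ! (i - 1)" and "b = ps ! i"
  have "take i ps = pre @ [a]" "drop i ps = b # post"
    using i take_Suc_conv_app_nth[of "i - 1" ps] Cons_nth_drop_Suc[of i ps]
    by (simp_all add: pre_def post_def a_def b_def)
  then have ps: "ps = pre @ [a, b] @ post"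
    using append_take_drop_id[of i ps] by simp
  have len: "length pre = i - 1" "length post = length ps - i - 1"
    using i by (simp_all add: pre_def post_def)
  then have "i - 1 = length pre" "i = Suc (length pre)"
    using i by simp_all
  then have upd: "ps[i - 1 := x, i := y] = pre @ [x, y] @ post"
    by (simp add: ps list_update_append)
  have "G * pauli_tensor [a, b] * G = sign_of f \<cdot>\<^sub>m pauli_tensor [x, y]"
    unfolding pauli_tensor_pair a_def b_def by (rule conj)
  with G have "kron (kron (1\<^sub>m (2 ^ length pre)) G) (1\<^sub>m (2 ^ length post)) * pauli_string_mat (s, pre @ [a, b] @ post) *
      kron (kron (1\<^sub>m (2 ^ length pre)) G) (1\<^sub>m (2 ^ length post)) = pauli_string_mat (s \<noteq> f, pre @ [x, y] @ post)"
    by (intro local_gate_conj_pauli_string) simp_all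
  then show ?thesis
    by (simp only: ps[symmetric] upd len)
qed

lemma gate_mat_conj_pauli_string:
  assumes "gate_valid (length ps) g"
  shows "gate_mat (length ps) g * pauli_string_mat (s, ps) * gate_mat (length ps) g =
         pauli_string_mat (gate_act g (s, ps))"
proof (cases g)
  case (GH i)
  with assms show ?thesis
    using one_qubit_gate_conj_pauli_string[OF _ _ Hm_carrier Hm_conj_pauli] by simp
next
  case (GZ i)
  with assms show ?thesis
    using one_qubit_gate_conj_pauli_string[OF _ _ Zm_carrier Zm_conj_pauli] by simp
next
  case (GCZ i)
  with assms show ?thesis
    using two_qubit_gate_conj_pauli_string[OF _ _ CZm_carrier CZm_conj_pauli]
    by (simp add: Let_def prod.case_eq_if)
qed

lemma kron_local_involution:
  assumes "G \<in> carrier_mat d d" "G * G = 1\<^sub>m d"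
  shows "kron (kron (1\<^sub>m p) G) (1\<^sub>m q) * kron (kron (1\<^sub>m p) G) (1\<^sub>m q) = 1\<^sub>m (p * d * q)"
proof -
  have "kron (kron (1\<^sub>m p) G) (1\<^sub>m q) * kron (kron (1\<^sub>m p) G) (1\<^sub>m q) =
        kron (kron (1\<^sub>m p) G * kron (1\<^sub>m p) G) (1\<^sub>m q * 1\<^sub>m q)"
    using assms by (intro kron_mult[where ca = "p * d" and cb = q]) (auto intro: kron_carrier)
  also have "kron (1\<^sub>m p) G * kron (1\<^sub>m p) G = kron (1\<^sub>m p) (1\<^sub>m d)"
    using assms by (subst kron_mult[where ca = p and cb = d]) auto
  finally show ?thesis by (simp add: kron_one)
qed

lemma power_split_one_qubit: "1 \<le> i \<Longrightarrow> i \<le> n \<Longrightarrow> 2 ^ (i - 1) * 2 * 2 ^ (n - i) = (2::nat) ^ n"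
proof -
  assume "1 \<le> i" "i \<le> n"
  then have "n = (i - 1) + 1 + (n - i)" by simp
  then have "(2::nat) ^ n = 2 ^ (i - 1) * 2 ^ 1 * 2 ^ (n - i)" by (metis power_add)
  then show ?thesis by simp
qed

lemma power_split_two_qubit: "1 \<le> i \<Longrightarrow> i + 1 \<le> n \<Longrightarrow> 2 ^ (i - 1) * 4 * 2 ^ (n - i - 1) = (2::nat) ^ n"
proof -
  assume "1 \<le> i" "i + 1 \<le> n"
  then have "n = (i - 1) + 2 + (n - i - 1)" by simp
  then have "(2::nat) ^ n = 2 ^ (i - 1) * 2 ^ 2 * 2 ^ (n - i - 1)" by (metis power_add)
  then show ?thesis by simp
qed

lemma gate_mat_carrier:
  assumes "gate_valid n g"
  shows "gate_mat n g \<in> carrier_mat (2 ^ n) (2 ^ n)"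
proof (cases g)
  case (GH i)
  with assms show ?thesis
    using kron_carrier[OF kron_carrier[OF one_carrier_mat Hm_carrier] one_carrier_mat, of "2 ^ (i - 1)" "2 ^ (n - i)"]
      power_split_one_qubit[of i n] by simp
next
  case (GZ i)
  with assms show ?thesis
    using kron_carrier[OF kron_carrier[OF one_carrier_mat Zm_carrier] one_carrier_mat, of "2 ^ (i - 1)" "2 ^ (n - i)"]
      power_split_one_qubit[of i n] by simp
next
  case (GCZ i)
  with assms show ?thesis
    using kron_carrier[OF kron_carrier[OF one_carrier_mat CZm_carrier] one_carrier_mat, of "2 ^ (i - 1)" "2 ^ (n - i - 1)"]
      power_split_two_qubit[of i n] by simp
qed

lemma gate_mat_involution:
  assumes "gate_valid n g"
  shows "gate_mat n g * gate_mat n g = 1\<^sub>m (2 ^ n)"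
proof (cases g)
  case (GH i)
  with assms show ?thesis
    using kron_local_involution[OF Hm_carrier Hm_involution, of "2 ^ (i - 1)" "2 ^ (n - i)"]
      power_split_one_qubit[of i n] by simp
next
  case (GZ i)
  with assms show ?thesis
    using kron_local_involution[OF Zm_carrier Zm_involution, of "2 ^ (i - 1)" "2 ^ (n - i)"]
      power_split_one_qubit[of i n] by simp
next
  case (GCZ i)
  with assms show ?thesis
    using kron_local_involution[OF CZm_carrier CZm_involution, of "2 ^ (i - 1)" "2 ^ (n - i - 1)"]
      power_split_two_qubit[of i n] by simp
qed

lemma mult_carrier_mat_square: "A \<in> carrier_mat n n \<Longrightarrow> B \<in> carrier_mat n n \<Longrightarrow> A * B \<in> carrier_mat n n"
  by (rule mult_carrier_mat)

lemma circuit_op_snoc: "circuit_op n (gs @ [g]) = gate_mat n g * circuit_op n gs"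
  unfolding circuit_op_def by simp

lemma circuit_op_carrier:
  "\<forall>g\<in>set gs. gate_valid n g \<Longrightarrow> circuit_op n gs \<in> carrier_mat (2 ^ n) (2 ^ n)"
proof (induction gs rule: rev_induct)
  case (snoc g gs)
  then have "gate_mat n g \<in> carrier_mat (2 ^ n) (2 ^ n)" "circuit_op n gs \<in> carrier_mat (2 ^ n) (2 ^ n)"
    using gate_mat_carrier by simp_all
  then show ?case
    unfolding circuit_op_snoc by (rule mult_carrier_mat)
qed (simp add: circuit_op_def)

lemma fold_gate_mat_mult:
  "\<forall>g\<in>set gs. gate_valid n g \<Longrightarrow> M \<in> carrier_mat (2 ^ n) k \<Longrightarrow>
   fold (\<lambda>g M. gate_mat n g * M) gs M = circuit_op n gs * M"
proof (induction gs arbitrary: M rule: rev_induct)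
  case (snoc g gs)
  then have G: "gate_mat n g \<in> carrier_mat (2 ^ n) (2 ^ n)" and C: "circuit_op n gs \<in> carrier_mat (2 ^ n) (2 ^ n)"
    using gate_mat_carrier circuit_op_carrier by simp_all
  have "fold (\<lambda>g M. gate_mat n g * M) (gs @ [g]) M = gate_mat n g * (circuit_op n gs * M)"
    using snoc by simp
  also have "\<dots> = circuit_op n (gs @ [g]) * M"
    unfolding circuit_op_snoc using G C snoc.prems(2) by (rule assoc_mult_mat[symmetric])
  finally show ?case .
qed (simp add: circuit_op_def)

lemma circuit_op_Cons:
  assumes "\<forall>h\<in>set (g # gs). gate_valid n h"
  shows "circuit_op n (g # gs) = circuit_op n gs * gate_mat n g"
proof -
  have G: "gate_mat n g \<in> carrier_mat (2 ^ n) (2 ^ n)"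
    using assms gate_mat_carrier by simp
  have "circuit_op n (g # gs) = fold (\<lambda>g M. gate_mat n g * M) gs (gate_mat n g * 1\<^sub>m (2 ^ n))"
    unfolding circuit_op_def by simp
  also have "\<dots> = circuit_op n gs * gate_mat n g"
    using assms G by (subst fold_gate_mat_mult[where k = "2 ^ n"]) auto
  finally show ?thesis .
qed

text \<open>Every gate is an involution, so a circuit is inverted by running it backwards.\<close>

lemma circuit_op_rev_mult:
  "\<forall>g\<in>set gs. gate_valid n g \<Longrightarrow> circuit_op n (rev gs) * circuit_op n gs = 1\<^sub>m (2 ^ n)"
proof (induction gs rule: rev_induct)
  case (snoc g gs)
  let ?G = "gate_mat n g" and ?C = "circuit_op n gs" and ?R = "circuit_op n (rev gs)"
  have carriers: "?G \<in> carrier_mat (2 ^ n) (2 ^ n)" "?C \<in> carrier_mat (2 ^ n) (2 ^ n)"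
    "?R \<in> carrier_mat (2 ^ n) (2 ^ n)"
    using snoc.prems gate_mat_carrier circuit_op_carrier[of gs] circuit_op_carrier[of "rev gs"] by auto
  have "circuit_op n (rev (gs @ [g])) * circuit_op n (gs @ [g]) = ?R * ?G * (?G * ?C)"
    using snoc.prems by (simp add: circuit_op_Cons circuit_op_snoc)
  also have "\<dots> = ?R * (?G * ?G) * ?C"
    using carriers by (simp add: assoc_mult_mat[of _ "2 ^ n" "2 ^ n" _ "2 ^ n" _ "2 ^ n"])
  also have "\<dots> = 1\<^sub>m (2 ^ n)"
    using snoc carriers gate_mat_involution[of n g] by simp
  finally show ?case .
qed (simp add: circuit_op_def)

lemma inv_mat_eqI:
  assumes A: "A \<in> carrier_mat n n" and B: "B \<in> carrier_mat n n"
    and AB: "A * B = 1\<^sub>m n" and BA: "B * A = 1\<^sub>m n"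
  shows "inv_mat A = B"
  unfolding inv_mat_def
proof (rule some_equality)
  fix D assume "D \<in> carrier_mat (dim_row A) (dim_row A) \<and> A * D = 1\<^sub>m (dim_row A) \<and> D * A = 1\<^sub>m (dim_row A)"
  then have D: "D \<in> carrier_mat n n" and AD: "A * D = 1\<^sub>m n" using A by auto
  have "D = (B * A) * D" using BA D by simp
  also have "\<dots> = B * (A * D)" using B A D by (rule assoc_mult_mat)
  finally show "D = B" using AD B by simp
qed (use A B AB BA in auto)

lemma inv_mat_circuit_op:
  assumes "\<forall>g\<in>set gs. gate_valid n g"
  shows "inv_mat (circuit_op n gs) = circuit_op n (rev gs)"
  using assms circuit_op_carrier[of gs n] circuit_op_carrier[of "rev gs" n]
    circuit_op_rev_mult[of gs n] circuit_op_rev_mult[of "rev gs" n]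
  by (intro inv_mat_eqI) auto

lemma circuit_op_conj_pauli_string:
  "\<forall>g\<in>set gs. gate_valid (length ps) g \<Longrightarrow>
   circuit_op (length ps) gs * pauli_string_mat (s, ps) * circuit_op (length ps) (rev gs) =
   pauli_string_mat (fold gate_act gs (s, ps))"
proof (induction gs rule: rev_induct)
  case (snoc g gs)
  let ?n = "length ps"
  let ?G = "gate_mat ?n g" and ?C = "circuit_op ?n gs" and ?R = "circuit_op ?n (rev gs)"
    and ?P = "pauli_string_mat (s, ps)"
  have carriers: "?G \<in> carrier_mat (2 ^ ?n) (2 ^ ?n)" "?C \<in> carrier_mat (2 ^ ?n) (2 ^ ?n)"
    "?R \<in> carrier_mat (2 ^ ?n) (2 ^ ?n)" "?P \<in> carrier_mat (2 ^ ?n) (2 ^ ?n)"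
    using snoc.prems gate_mat_carrier circuit_op_carrier[of gs] circuit_op_carrier[of "rev gs"] by auto
  have "circuit_op ?n (gs @ [g]) * ?P * circuit_op ?n (rev (gs @ [g])) = ?G * ?C * ?P * (?R * ?G)"
    using snoc.prems by (simp add: circuit_op_Cons circuit_op_snoc)
  also have "\<dots> = ?G * (?C * ?P * ?R) * ?G"
    using carriers
    by (simp add: assoc_mult_mat[of _ "2 ^ ?n" "2 ^ ?n" _ "2 ^ ?n" _ "2 ^ ?n"] mult_carrier_mat_square)
  also have "\<dots> = ?G * pauli_string_mat (fold gate_act gs (s, ps)) * ?G"
    using snoc by simp
  also have "\<dots> = pauli_string_mat (fold gate_act (gs @ [g]) (s, ps))"
  proof -
    obtain s' ps' where st: "fold gate_act gs (s, ps) = (s', ps')"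
      by (cases "fold gate_act gs (s, ps)")
    then have "length ps' = ?n"
      using length_fold_gate_act[of gs "(s, ps)"] by simp
    then show ?thesis
      using snoc.prems gate_mat_conj_pauli_string[of ps' g s'] st by simp
  qed
  finally show ?case .
qed (simp add: circuit_op_def)

lemma conj_mat_circuit_op_pauli_string:
  "\<forall>g\<in>set gs. gate_valid (length ps) g \<Longrightarrow>
   conj_mat (circuit_op (length ps) gs) (pauli_string_mat (s, ps)) = pauli_string_mat (fold gate_act gs (s, ps))"
  by (simp add: conj_mat_def inv_mat_circuit_op circuit_op_conj_pauli_string)

lemma pauli_string_mat_Cons: "pauli_string_mat (s, x # ps) = kron (pauli_mat x) (pauli_string_mat (s, ps))"
  unfolding pauli_string_mat_def by (simp add: kron_smult_right)

lemma pauli_tensor_square: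
  "pauli_tensor ps * pauli_tensor ps = sign_of (odd (count_list ps PY)) \<cdot>\<^sub>m 1\<^sub>m (2 ^ length ps)"
proof (induction ps)
  case (Cons x ps)
  have "pauli_tensor (x # ps) * pauli_tensor (x # ps) =
        kron (pauli_mat x * pauli_mat x) (pauli_tensor ps * pauli_tensor ps)"
    by (simp, rule kron_mult[OF pauli_mat_carrier pauli_tensor_carrier pauli_mat_carrier pauli_tensor_carrier])
  also have "\<dots> = kron (sign_of (x = PY) \<cdot>\<^sub>m 1\<^sub>m 2) (sign_of (odd (count_list ps PY)) \<cdot>\<^sub>m 1\<^sub>m (2 ^ length ps))"
    using Cons pauli_mat_square by simp
  also have "\<dots> = sign_of (odd (count_list (x # ps) PY)) \<cdot>\<^sub>m 1\<^sub>m (2 ^ length (x # ps))"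
    by (simp add: kron_smult_left kron_smult_right kron_one smult_smult_mat sign_of_def)
  finally show ?case .
qed (simp add: sign_of_def)

lemma pauli_string_mat_square:
  "pauli_string_mat (s, ps) * pauli_string_mat (s, ps) = sign_of (odd (count_list ps PY)) \<cdot>\<^sub>m 1\<^sub>m (2 ^ length ps)"
proof -
  have T: "pauli_tensor ps \<in> carrier_mat (2 ^ length ps) (2 ^ length ps)" by simp
  then have "sign_of s \<cdot>\<^sub>m pauli_tensor ps \<in> carrier_mat (2 ^ length ps) (2 ^ length ps)" by simp
  then have "pauli_string_mat (s, ps) * pauli_string_mat (s, ps) =
             (sign_of s * sign_of s) \<cdot>\<^sub>m (pauli_tensor ps * pauli_tensor ps)"
    unfolding pauli_string_mat_def fst_conv snd_conv
    by (simp only: mult_smult_distrib[OF _ T] mult_smult_assoc_mat[OF T T] smult_smult_mat)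
  then show ?thesis
    by (simp add: pauli_tensor_square sign_of_def)
qed

lemma pauli_string_mat_nonzero: "pauli_string_mat (s, ps) \<noteq> 0\<^sub>m (2 ^ length ps) (2 ^ length ps)"
proof
  assume "pauli_string_mat (s, ps) = 0\<^sub>m (2 ^ length ps) (2 ^ length ps)"
  then have "(sign_of (odd (count_list ps PY)) \<cdot>\<^sub>m 1\<^sub>m (2 ^ length ps)) $$ (0, 0) =
             (0\<^sub>m (2 ^ length ps) (2 ^ length ps) :: real mat) $$ (0, 0)"
    using pauli_string_mat_square[of s ps] by simp
  then show False by (simp add: sign_of_def split: if_splits)
qed

lemma pauli_mat_index: "u < 2 \<Longrightarrow> v < 2 \<Longrightarrow> pauli_mat x $$ (u, v) = pauli_entry x u v"
  by (simp add: pauli_mat_eq_mat)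

lemma smult_neg_one_pauli_string_mat: "(-1) \<cdot>\<^sub>m pauli_string_mat (s, ps) = pauli_string_mat (\<not> s, ps)"
  unfolding pauli_string_mat_def by (simp add: smult_smult_mat sign_of_def)

lemma smult_zero_mat_carrier: "A \<in> carrier_mat k k \<Longrightarrow> (0::real) \<cdot>\<^sub>m A = 0\<^sub>m k k"
  by (rule eq_matI) auto

text \<open>The first letter is read off from the four \<open>2 \<times> 2\<close> blocks, each of which is
  \<open>0\<close> or \<open>\<plusminus>\<close> the (non-zero) rest of the string.\<close>

lemma pauli_string_mat_inj:
  "length ps = length qs \<Longrightarrow> pauli_string_mat (s, ps) = pauli_string_mat (t, qs) \<Longrightarrow> s = t \<and> ps = qs"
proof (induction ps arbitrary: s t qs)
  case Nil
  then show ?case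
    by (auto simp: pauli_string_mat_def sign_of_def dest!: arg_cong[where f = "\<lambda>M. M $$ (0, 0)"] split: if_splits)
next
  case (Cons x ps)
  then obtain y qs' where qs: "qs = y # qs'" by (cases qs) auto
  have len: "length ps = length qs'" using Cons.prems qs by simp
  let ?A = "pauli_string_mat (s, ps)" and ?B = "pauli_string_mat (t, qs')" and ?K = "2 ^ length ps"
  have A: "?A \<in> carrier_mat ?K ?K" and B: "?B \<in> carrier_mat ?K ?K"
    using len pauli_string_mat_carrier by metis+
  have "kron (pauli_mat x) ?A = kron (pauli_mat y) ?B"
    using Cons.prems qs by (simp add: pauli_string_mat_Cons)
  then have blocks: "pauli_entry x u v \<cdot>\<^sub>m ?A = pauli_entry y u v \<cdot>\<^sub>m ?B" if "u < 2" "v < 2" for u v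
    using kron_eq_imp_block_eq[OF pauli_mat_carrier A pauli_mat_carrier B _ that] that
    by (simp add: pauli_mat_index)
  have nonzero: "?A \<noteq> 0\<^sub>m ?K ?K" "?B \<noteq> 0\<^sub>m ?K ?K"
    using pauli_string_mat_nonzero[of s ps] pauli_string_mat_nonzero[of t qs'] len by simp_all
  have IH: "\<And>s' t'. pauli_string_mat (s', ps) = pauli_string_mat (t', qs') \<Longrightarrow> s' = t' \<and> ps = qs'"
    using Cons.IH len by blast
  note smult_simps = smult_neg_one_pauli_string_mat smult_zero_mat_carrier[OF A] smult_zero_mat_carrier[OF B]
  show ?case
    using blocks[of 0 0] blocks[of 0 1] blocks[of 1 0] blocks[of 1 1] nonzero qs
      IH[of s t] IH[of "\<not> s" t] IH[of s "\<not> t"] IH[of "\<not> s" "\<not> t"]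
    by (cases x; cases y; simp add: smult_simps; metis)
qed

lemma pauli_group_elem:
  assumes "P \<in> pauli_group n"
  obtains s ps where "length ps = n" "P = pauli_string_mat (s, ps)"
proof -
  obtain c Ms where P: "P = c \<cdot>\<^sub>m tensor_list Ms" and c: "c \<in> {1, -1}"
    and Ms: "length Ms = n" "set Ms \<subseteq> {1\<^sub>m 2, Xm, Zm, Xm * Zm}"
    using assms unfolding pauli_group_def by blast
  have "\<forall>M\<in>set Ms. \<exists>x. M = pauli_mat x"
    using Ms(2) by (metis insert_iff empty_iff pauli_mat.simps subsetD)
  then obtain ps where "Ms = map pauli_mat ps"
    by (metis ex_map_conv)
  moreover have "c = sign_of (c = -1)"
    using c by (auto simp: sign_of_def)
  ultimately have "length ps = n" "P = pauli_string_mat (c = -1, ps)"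
    using P Ms by (simp_all add: pauli_string_mat_def)
  then show ?thesis by (rule that)
qed

lemma pauli_string_mat_all_PI:
  "set ps \<subseteq> {PI} \<Longrightarrow> pauli_string_mat (s, ps) = sign_of s \<cdot>\<^sub>m 1\<^sub>m (2 ^ length ps)"
proof -
  assume "set ps \<subseteq> {PI}"
  then have "map pauli_mat ps = replicate (length ps) (1\<^sub>m 2)"
    by (induction ps) auto
  then show ?thesis
    by (simp add: pauli_string_mat_def tensor_list_replicate_one)
qed

definition target_string :: "nat \<Rightarrow> bool \<times> pauli list" where
  "target_string n = (False, PZ # replicate (n - 1) PI)"

lemma kron_Zm_one_eq_target: "kron Zm (1\<^sub>m (2 ^ (n - 1))) = pauli_string_mat (target_string n)"
  using pauli_string_mat_all_PI[of "replicate (n - 1) PI" False]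
  by (simp add: target_string_def pauli_string_mat_Cons sign_of_def set_replicate_conv_if)

section \<open>Z-circuits acting on Pauli strings\<close>

fun shift_gate :: "nat \<Rightarrow> gate \<Rightarrow> gate" where
  "shift_gate k (GH i) = GH (k + i)"
| "shift_gate k (GZ i) = GZ (k + i)"
| "shift_gate k (GCZ i) = GCZ (k + i)"

lemma b_gates_shift: "b_gates b (k + 1) = map (shift_gate k) (b_gates b 1)"
  by (cases b) simp_all

lemma gate_act_shift:
  assumes "gate_valid (length mid) g" "length pre = k"
  shows "gate_act (shift_gate k g) (s, pre @ mid @ post) =
         (fst (gate_act g (s, mid)), pre @ snd (gate_act g (s, mid)) @ post)"
  using assms by (cases g) (auto simp: nth_append list_update_append split: prod.split)

lemma fold_gate_act_shift:
  "\<forall>g\<in>set gs. gate_valid (length mid) g \<Longrightarrow> length pre = k \<Longrightarrow>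
   fold gate_act (map (shift_gate k) gs) (s, pre @ mid @ post) =
   (fst (fold gate_act gs (s, mid)), pre @ snd (fold gate_act gs (s, mid)) @ post)"
proof (induction gs arbitrary: s mid)
  case (Cons g gs)
  obtain s' mid' where g: "gate_act g (s, mid) = (s', mid')"
    by (cases "gate_act g (s, mid)")
  then have "length mid' = length mid"
    using length_gate_act[of g "(s, mid)"] by simp
  with Cons.prems g show ?case
    using gate_act_shift[of mid g pre k s post] Cons.IH[of mid' s'] by simp
qed simp

definition a_act :: "asym \<Rightarrow> pauli \<Rightarrow> bool \<times> pauli" where
  "a_act a x = (if a = A2 then h_conj x else (False, x))"

definition b_act :: "bsym \<Rightarrow> bool \<Rightarrow> pauli \<Rightarrow> pauli \<Rightarrow> bool \<times> pauli list" where
  "b_act b s u l = fold gate_act (b_gates b 1) (s, [u, l])"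

definition c_act :: "csym \<Rightarrow> bool \<Rightarrow> pauli \<Rightarrow> bool \<times> pauli list" where
  "c_act c s l = fold gate_act (c_gates c 1) (s, [l])"

lemma fold_a_gates:
  "fold gate_act (a_gates a (Suc (length pre))) (s, pre @ x # post) =
   (s \<noteq> fst (a_act a x), pre @ snd (a_act a x) # post)"
  by (cases a) (simp_all add: a_act_def nth_append list_update_append)

lemma fold_b_gates:
  "fold gate_act (b_gates b (Suc (length pre))) (s, pre @ [u, l] @ post) =
   (fst (b_act b s u l), pre @ snd (b_act b s u l) @ post)"
proof -
  have "\<forall>g\<in>set (b_gates b 1). gate_valid (length [u, l]) g"
    by (cases b) auto
  moreover have "b_gates b (Suc (length pre)) = map (shift_gate (length pre)) (b_gates b 1)"
    using b_gates_shift[of b "length pre"] by simp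
  ultimately show ?thesis
    using fold_gate_act_shift[of "b_gates b 1" "[u, l]" pre "length pre" s post]
    by (simp add: b_act_def)
qed

lemma fold_c_gates:
  "fold gate_act (c_gates c 1) (s, l # post) = (fst (c_act c s l), snd (c_act c s l) @ post)"
  using fold_gate_act_shift[of "c_gates c 1" "[l]" "[]" 0 s post]
  by (cases c) (simp_all add: c_act_def)

lemma length_b_act: "length (snd (b_act b s u l)) = 2"
  unfolding b_act_def using length_fold_gate_act[of "b_gates b 1" "(s, [u, l])"] by simp

lemma length_c_act: "length (snd (c_act c s l)) = 1"
  unfolding c_act_def using length_fold_gate_act[of "c_gates c 1" "(s, [l])"] by simp

text \<open>The type of a symbol is the letter, \<open>Z\<close> (single) or \<open>Y\<close> (double), that it expects
  on its lower qubit or leaves on its upper qubit.\<close>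

fun ty_pauli :: "ty \<Rightarrow> pauli" where
  "ty_pauli Single = PZ"
| "ty_pauli Double = PY"

fun a_select :: "pauli \<Rightarrow> asym" where
  "a_select PZ = A1" | "a_select PX = A2" | "a_select PY = A3" | "a_select PI = A1"

fun b_select :: "ty \<Rightarrow> pauli \<Rightarrow> bsym" where
  "b_select Single PI = B1" | "b_select Single PX = B2" | "b_select Single PZ = B3" | "b_select Single PY = B4"
| "b_select Double PI = B5" | "b_select Double PX = B6" | "b_select Double PZ = B7" | "b_select Double PY = B8"

lemma a_act_PI_iff: "snd (a_act a x) = PI \<longleftrightarrow> x = PI"
  by (cases a; cases x) (simp_all add: a_act_def)

lemma a_act_eq_ty_pauli_imp: "x \<noteq> PI \<Longrightarrow> snd (a_act a x) = ty_pauli (a_out a) \<Longrightarrow> a = a_select x"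
  by (cases a; cases x) (simp_all add: a_act_def)

lemma a_act_a_select: "x \<noteq> PI \<Longrightarrow> snd (a_act (a_select x) x) = ty_pauli (a_out (a_select x))"
  by (cases x) (simp_all add: a_act_def)

lemma ty_pauli_a_select_eq_PY_iff: "x \<noteq> PI \<Longrightarrow> ty_pauli (a_out (a_select x)) = PY \<longleftrightarrow> x = PY"
  by (cases x) simp_all

lemma b_act_PI_PI: "b_act b s PI PI = (s, [PI, PI])"
  by (cases b) (simp_all add: b_act_def)

lemma b_act_lower_PI: "u \<noteq> PI \<Longrightarrow> snd (b_act b s u PI) ! 1 \<noteq> PI"
  by (cases b; cases u) (simp_all add: b_act_def)

lemma b_act_clears_bad_letter:
  "l \<noteq> PI \<Longrightarrow> l \<noteq> ty_pauli (b_in b) \<Longrightarrow> snd (b_act b s u l) ! 1 = PI \<Longrightarrow>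
   snd (b_act b s u l) ! 0 \<noteq> PI \<and> snd (b_act b s u l) ! 0 \<noteq> ty_pauli (b_out b)"
  by (cases b; cases u; cases l) (simp_all add: b_act_def)

lemma b_act_clears_imp_b_select:
  "snd (b_act b s u (ty_pauli (b_in b))) ! 1 = PI \<Longrightarrow>
   b = b_select (b_in b) u \<and> snd (b_act b s u (ty_pauli (b_in b))) ! 0 = ty_pauli (b_out b)"
  by (cases b; cases u) (simp_all add: b_act_def)

lemma b_select_clears:
  "b_in (b_select t u) = t \<and>
   snd (b_act (b_select t u) s u (ty_pauli t)) ! 1 = PI \<and>
   snd (b_act (b_select t u) s u (ty_pauli t)) ! 0 = ty_pauli (b_out (b_select t u)) \<and>
   (ty_pauli (b_out (b_select t u)) = PY \<longleftrightarrow> (u = PY) \<noteq> (ty_pauli t = PY))"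
  by (cases t; cases u) (simp_all add: b_act_def)

lemma c_in_eq_Single [simp]: "c_in c = Single"
  by (cases c) simp_all

lemma c_act_target_imp_PZ: "c_act c s l = (False, [PZ]) \<Longrightarrow> l = PZ"
  by (cases c; cases l; cases s) (simp_all add: c_act_def)

lemma c_act_PZ_target_iff: "c_act c s PZ = (False, [PZ]) \<longleftrightarrow> c = (if s then C2 else C1)"
  by (cases c; cases s) (simp_all add: c_act_def)

definition chain_gates :: "bsym list \<Rightarrow> nat \<Rightarrow> gate list" where
  "chain_gates bs m = concat (map (\<lambda>k. b_gates (bs ! k) (m - 1 - k)) [0..<length bs])"

lemma chain_gates_Nil [simp]: "chain_gates [] m = []"
  by (simp add: chain_gates_def)

lemma chain_gates_Cons: "chain_gates (b # bs) m = b_gates b (m - 1) @ chain_gates bs (m - 1)"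
proof -
  have "[0..<length (b # bs)] = 0 # map Suc [0..<length bs]"
    by (simp add: map_Suc_upt upt_conv_Cons del: upt_Suc)
  then show ?thesis unfolding chain_gates_def by (simp add: o_def)
qed

text \<open>\<open>chain_clears bs c s us l\<close>: with sign \<open>s\<close>, letter \<open>l\<close> on the lower qubit of the first
  \<open>B\<close>-symbol and the letters \<open>us\<close> on the qubits above it (nearest first), every \<open>B\<close>-symbol
  turns its lower qubit into \<open>I\<close>, and the final \<open>C\<close>-symbol leaves \<open>+Z\<close>.\<close>

fun chain_clears :: "bsym list \<Rightarrow> csym \<Rightarrow> bool \<Rightarrow> pauli list \<Rightarrow> pauli \<Rightarrow> bool" where
  "chain_clears [] c s [] l = (c_act c s l = (False, [PZ]))"
| "chain_clears (b # bs) c s (u # us) l =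
     (snd (b_act b s u l) ! 1 = PI \<and> chain_clears bs c (fst (b_act b s u l)) us (snd (b_act b s u l) ! 0))"
| "chain_clears _ _ _ _ _ = False"

lemma eq_replicate_length_iff: "xs = replicate (length xs) a \<longleftrightarrow> set xs \<subseteq> {a}"
  by (induction xs) auto

lemma fold_chain_gates_target_iff:
  "length bs = length us \<Longrightarrow>
   fold gate_act (chain_gates bs (Suc (length us)) @ c_gates c 1) (s, rev us @ l # post) =
     (False, PZ # replicate (length us + length post) PI)
   \<longleftrightarrow> chain_clears bs c s us l \<and> set post \<subseteq> {PI}"
proof (induction bs arbitrary: us s l post)
  case Nil
  then have "us = []" by simp
  moreover obtain r where "snd (c_act c s l) = [r]"
    using length_c_act[of c s l] by (cases "snd (c_act c s l)") auto
  ultimately show ?case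
    using fold_c_gates[of c s l post] eq_replicate_length_iff[of post PI]
    by (cases "c_act c s l") (auto simp: eq_commute[of post])
next
  case (Cons b bs)
  then obtain u us' where us: "us = u # us'" by (cases us) auto
  obtain s' r0 r1 where B: "b_act b s u l = (s', [r0, r1])"
    using length_b_act[of b s u l]
    by (cases "b_act b s u l"; cases "snd (b_act b s u l)" rule: list.exhaust) (auto simp: length_Suc_conv)
  have "fold gate_act (chain_gates (b # bs) (Suc (length us)) @ c_gates c 1) (s, rev us @ l # post) =
        fold gate_act (chain_gates bs (Suc (length us')) @ c_gates c 1) (s', rev us' @ r0 # r1 # post)"
    using fold_b_gates[of b "rev us'" s u l post] B us by (simp add: chain_gates_Cons)
  then show ?case
    using Cons.IH[of us' s' r0 "r1 # post"] Cons.prems B us by auto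
qed

lemma not_chain_clears_bad_letter:
  "l \<noteq> PI \<Longrightarrow> l \<noteq> ty_pauli t \<Longrightarrow> types_ok t bs c \<Longrightarrow> length bs = length us \<Longrightarrow>
   \<not> chain_clears bs c s us l"
proof (induction bs arbitrary: t s us l)
  case Nil
  then show ?case using c_act_target_imp_PZ[of c s l] by (cases c) auto
next
  case (Cons b bs)
  then obtain u us' where us: "us = u # us'" by (cases us) auto
  have types: "b_in b = t" "types_ok (b_out b) bs c" using Cons.prems by auto
  show ?case
  proof
    assume "chain_clears (b # bs) c s us l"
    then have cleared: "snd (b_act b s u l) ! 1 = PI"
      and rest: "chain_clears bs c (fst (b_act b s u l)) us' (snd (b_act b s u l) ! 0)"
      using us by auto
    from b_act_clears_bad_letter[OF Cons.prems(1) _ cleared] Cons.prems(2) types(1)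
    have "snd (b_act b s u l) ! 0 \<noteq> PI" "snd (b_act b s u l) ! 0 \<noteq> ty_pauli (b_out b)" by auto
    from Cons.IH[OF this types(2)] Cons.prems(4) us rest show False by simp
  qed
qed

lemma not_chain_clears_PI: "length bs = length us \<Longrightarrow> \<not> chain_clears bs c s us PI"
proof (induction bs arbitrary: s us)
  case Nil
  then show ?case using c_act_target_imp_PZ[of c s PI] by auto
next
  case (Cons b bs)
  then obtain u us' where us: "us = u # us'" by (cases us) auto
  show ?case
  proof (cases "u = PI")
    case True
    then show ?thesis using Cons.IH[of us' s] Cons.prems us b_act_PI_PI[of b s] by simp
  next
    case False
    then show ?thesis using b_act_lower_PI[of u b s] us by simp
  qed
qed

lemma chain_clears_unique:
  "types_ok t bs c \<Longrightarrow> types_ok t bs' c' \<Longrightarrow> length bs = length us \<Longrightarrow> length bs' = length us \<Longrightarrow>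
   chain_clears bs c s us (ty_pauli t) \<Longrightarrow> chain_clears bs' c' s us (ty_pauli t) \<Longrightarrow> bs = bs' \<and> c = c'"
proof (induction bs arbitrary: bs' t s us)
  case Nil
  then have "us = []" "bs' = []" by auto
  then show ?case
    using Nil c_act_target_imp_PZ[of c s] c_act_PZ_target_iff[of c s] c_act_PZ_target_iff[of c' s] by auto
next
  case (Cons b bs)
  then obtain u us' where us: "us = u # us'" by (cases us) auto
  from Cons.prems obtain b' bs'' where bs': "bs' = b' # bs''" by (cases bs') auto
  have types: "b_in b = t" "types_ok (b_out b) bs c" "b_in b' = t" "types_ok (b_out b') bs'' c'"
    using Cons.prems bs' by auto
  have chain: "snd (b_act b s u (ty_pauli t)) ! 1 = PI"
    "chain_clears bs c (fst (b_act b s u (ty_pauli t))) us' (snd (b_act b s u (ty_pauli t)) ! 0)"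
    "snd (b_act b' s u (ty_pauli t)) ! 1 = PI"
    "chain_clears bs'' c' (fst (b_act b' s u (ty_pauli t))) us' (snd (b_act b' s u (ty_pauli t)) ! 0)"
    using Cons.prems us bs' by auto
  have "b = b_select t u" "snd (b_act b s u (ty_pauli t)) ! 0 = ty_pauli (b_out b)" "b' = b_select t u"
    using b_act_clears_imp_b_select[of b s u] b_act_clears_imp_b_select[of b' s u] chain(1,3) types(1,3)
    by auto
  moreover from this have "bs = bs'' \<and> c = c'"
    using Cons.IH[of "b_out b" bs'' us' "fst (b_act b s u (ty_pauli t))"] types chain(2,4) Cons.prems(3,4) us bs'
    by simp
  ultimately show ?case using bs' by simp
qed

lemma chain_clears_exists:
  "even (count_list (ty_pauli t # us) PY) \<Longrightarrow>
   \<exists>bs c. types_ok t bs c \<and> length bs = length us \<and> chain_clears bs c s us (ty_pauli t)"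
proof (induction us arbitrary: t s)
  case Nil
  then have "t = Single" by (cases t) auto
  then show ?case
    using c_act_PZ_target_iff[of "if s then C2 else C1" s]
    by (intro exI[of _ "[]"] exI[of _ "if s then C2 else C1"]) auto
next
  case (Cons u us)
  let ?b = "b_select t u"
  note clears = b_select_clears[of t u s]
  have "even (count_list (ty_pauli (b_out ?b) # us) PY)"
    using Cons.prems clears by (auto split: if_splits)
  from Cons.IH[OF this] obtain bs c where
    "types_ok (b_out ?b) bs c" "length bs = length us" "chain_clears bs c (fst (b_act ?b s u (ty_pauli t))) us (ty_pauli (b_out ?b))"
    by blast
  then show ?case
    using clears by (intro exI[of _ "?b # bs"] exI[of _ c]) auto
qed

lemma split_last_non_PI:
  "\<exists>x\<in>set ps. x \<noteq> PI \<Longrightarrow> \<exists>pre x post. ps = pre @ x # post \<and> x \<noteq> PI \<and> set post \<subseteq> {PI}"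
proof (induction ps rule: rev_induct)
  case (snoc y ys)
  show ?case
  proof (cases "y = PI")
    case True
    with snoc obtain pre x post where "ys = pre @ x # post" "x \<noteq> PI" "set post \<subseteq> {PI}"
      by auto
    with True show ?thesis
      by (intro exI[of _ pre] exI[of _ x] exI[of _ "post @ [PI]"]) auto
  next
    case False
    then show ?thesis by (intro exI[of _ ys] exI[of _ y] exI[of _ "[]"]) auto
  qed
qed simp

lemma split_last_non_PI_unique:
  assumes "pre @ x # post = pre' @ x' # post'" "x \<noteq> PI" "x' \<noteq> PI" "set post \<subseteq> {PI}" "set post' \<subseteq> {PI}"
  shows "pre = pre' \<and> x = x' \<and> post = post'"
proof -
  have trailing: "takeWhile (\<lambda>y. y = PI) (rev (qs @ y # rs)) = rev rs" if "y \<noteq> PI" "set rs \<subseteq> {PI}" for qs y rs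
    using that by (auto simp: takeWhile_append)
  have "post = post'"
    using trailing[of x post pre] trailing[of x' post' pre'] assms by simp
  with assms(1) show ?thesis by simp
qed

lemma fold_zcirc_gates_target_iff:
  assumes "length bs = length pre"
  shows "fold gate_act (zcirc_gates (ZC (Suc (length pre)) a bs c)) (s, pre @ x # post) =
           target_string (length (pre @ x # post))
         \<longleftrightarrow> chain_clears bs c (s \<noteq> fst (a_act a x)) (rev pre) (snd (a_act a x)) \<and> set post \<subseteq> {PI}"
proof -
  have "zcirc_gates (ZC (Suc (length pre)) a bs c) =
        a_gates a (Suc (length pre)) @ chain_gates bs (Suc (length (rev pre))) @ c_gates c 1"
    by (simp add: chain_gates_def)
  then show ?thesis
    using fold_chain_gates_target_iff[of bs "rev pre" c "s \<noteq> fst (a_act a x)" "snd (a_act a x)" post] assms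
    by (simp add: fold_a_gates target_string_def)
qed

lemma zcircuit_reaches_target_iff:
  assumes split: "ps = pre @ x # post" "x \<noteq> PI" "set post \<subseteq> {PI}"
  shows "is_zcircuit (length ps) L \<and> fold gate_act (zcirc_gates L) (s, ps) = target_string (length ps) \<longleftrightarrow>
         (\<exists>bs c. L = ZC (Suc (length pre)) (a_select x) bs c \<and> types_ok (a_out (a_select x)) bs c \<and>
                 length bs = length pre \<and>
                 chain_clears bs c (s \<noteq> fst (a_act (a_select x) x)) (rev pre) (ty_pauli (a_out (a_select x))))"
  (is "?lhs \<longleftrightarrow> ?rhs")
proof
  assume ?rhs
  then show ?lhs
    using split fold_zcirc_gates_target_iff a_act_a_select[OF split(2)] by auto
next
  assume ?lhs
  then obtain m a bs c where L: "L = ZC m a bs c"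
    and z: "1 \<le> m" "m \<le> length ps" "length bs = m - 1" "types_ok (a_out a) bs c"
    and reach: "fold gate_act (zcirc_gates (ZC m a bs c)) (s, ps) = target_string (length ps)"
    by (cases L) auto
  define pre' x' post' where "pre' = take (m - 1) ps" and "x' = ps ! (m - 1)" and "post' = drop m ps"
  have ps': "ps = pre' @ x' # post'" and m: "m = Suc (length pre')" and len: "length bs = length (rev pre')"
    using z id_take_nth_drop[of "m - 1" ps] by (simp_all add: pre'_def x'_def post'_def)
  then have chain: "chain_clears bs c (s \<noteq> fst (a_act a x')) (rev pre') (snd (a_act a x'))"
    and post': "set post' \<subseteq> {PI}"
    using reach fold_zcirc_gates_target_iff[of bs pre' a c s x' post'] by simp_all
  have "snd (a_act a x') \<noteq> PI"
    using not_chain_clears_PI[OF len] chain by metis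
  then have x': "x' \<noteq> PI" and "snd (a_act a x') = ty_pauli (a_out a)"
    using not_chain_clears_bad_letter[OF _ _ z(4) len] chain a_act_PI_iff by blast+
  then have "a = a_select x'"
    by (rule a_act_eq_ty_pauli_imp)
  moreover have "pre' = pre \<and> x' = x \<and> post' = post"
    using split_last_non_PI_unique split ps' x' post' by metis
  ultimately show ?rhs
    using L m z chain \<open>snd (a_act a x') = ty_pauli (a_out a)\<close> by auto
qed

lemma ex1_zcircuit_reaching_target:
  assumes "\<exists>x\<in>set ps. x \<noteq> PI" and even: "even (count_list ps PY)"
  shows "\<exists>!L. is_zcircuit (length ps) L \<and> fold gate_act (zcirc_gates L) (s, ps) = target_string (length ps)"
proof -
  obtain pre x post where split: "ps = pre @ x # post" "x \<noteq> PI" "set post \<subseteq> {PI}"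
    using split_last_non_PI[OF assms(1)] by blast
  let ?a = "a_select x"
  let ?t = "a_out ?a" and ?s = "s \<noteq> fst (a_act ?a x)"
  have "PY \<notin> set post" using split(3) by auto
  then have "even (count_list (ty_pauli ?t # rev pre) PY)"
    using even split ty_pauli_a_select_eq_PY_iff[OF split(2)] by auto
  then obtain bs c where bc: "types_ok ?t bs c" "length bs = length (rev pre)"
    "chain_clears bs c ?s (rev pre) (ty_pauli ?t)"
    using chain_clears_exists by blast
  show ?thesis
  proof (rule ex1I)
    show "is_zcircuit (length ps) (ZC (Suc (length pre)) ?a bs c) \<and>
          fold gate_act (zcirc_gates (ZC (Suc (length pre)) ?a bs c)) (s, ps) = target_string (length ps)"
      by (subst zcircuit_reaches_target_iff[OF split]) (use bc in auto)
  next
    fix L assume "is_zcircuit (length ps) L \<and> fold gate_act (zcirc_gates L) (s, ps) = target_string (length ps)"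
    then obtain bs' c' where "L = ZC (Suc (length pre)) ?a bs' c'" "types_ok ?t bs' c'"
      "length bs' = length (rev pre)" "chain_clears bs' c' ?s (rev pre) (ty_pauli ?t)"
      using zcircuit_reaches_target_iff[OF split] by auto
    then show "L = ZC (Suc (length pre)) ?a bs c"
      using chain_clears_unique[of ?t bs' c' bs c "rev pre"] bc by auto
  qed
qed

lemma zcirc_gates_valid: "is_zcircuit n L \<Longrightarrow> \<forall>g\<in>set (zcirc_gates L). gate_valid n g"
proof (cases L)
  case (ZC m a bs c)
  assume "is_zcircuit n L"
  then have m: "1 \<le> m" "m \<le> n" "length bs = m - 1" using ZC by auto
  have "gate_valid n g" if "k < length bs" "g \<in> set (b_gates (bs ! k) (m - 1 - k))" for k g
    using that m by (cases "bs ! k") auto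
  moreover have "\<forall>g\<in>set (a_gates a m @ c_gates c 1). gate_valid n g"
    using m by (cases a; cases c) auto
  ultimately show ?thesis using ZC by auto
qed

lemma conj_zcirc_op_eq_target_iff:
  assumes "is_zcircuit (length ps) L"
  shows "conj_mat (zcirc_op (length ps) L) (pauli_string_mat (s, ps)) = pauli_string_mat (target_string (length ps))
         \<longleftrightarrow> fold gate_act (zcirc_gates L) (s, ps) = target_string (length ps)"
proof -
  obtain s' ps' where st: "fold gate_act (zcirc_gates L) (s, ps) = (s', ps')"
    by (cases "fold gate_act (zcirc_gates L) (s, ps)")
  have "length ps \<ge> 1" using assms by (cases L) auto
  then have "length ps' = length (PZ # replicate (length ps - 1) PI)"
    using length_fold_gate_act[of "zcirc_gates L" "(s, ps)"] st by simp
  moreover have "conj_mat (zcirc_op (length ps) L) (pauli_string_mat (s, ps)) = pauli_string_mat (s', ps')"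
    using conj_mat_circuit_op_pauli_string[OF zcirc_gates_valid[OF assms], of s] st
    by (simp add: zcirc_op_def)
  ultimately show ?thesis
    using pauli_string_mat_inj[of ps' "PZ # replicate (length ps - 1) PI" s' False] st
    by (auto simp: target_string_def)
qed

lemma even_count_PY_if_square_one:
  assumes "pauli_string_mat (s, ps) * pauli_string_mat (s, ps) = 1\<^sub>m (2 ^ length ps)"
  shows "even (count_list ps PY)"
proof -
  have "(sign_of (odd (count_list ps PY)) \<cdot>\<^sub>m 1\<^sub>m (2 ^ length ps)) $$ (0, 0) = (1\<^sub>m (2 ^ length ps) :: real mat) $$ (0, 0)"
    using assms pauli_string_mat_square[of s ps] by simp
  then show ?thesis by (simp add: sign_of_def split: if_splits)
qed

lemma non_PI_if_not_scalar:
  assumes "pauli_string_mat (s, ps) \<noteq> 1\<^sub>m (2 ^ length ps)" "pauli_string_mat (s, ps) \<noteq> - 1\<^sub>m (2 ^ length ps)"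
  shows "\<exists>x\<in>set ps. x \<noteq> PI"
proof (rule ccontr)
  assume "\<not> (\<exists>x\<in>set ps. x \<noteq> PI)"
  then have "pauli_string_mat (s, ps) = sign_of s \<cdot>\<^sub>m 1\<^sub>m (2 ^ length ps)"
    by (intro pauli_string_mat_all_PI) auto
  moreover have "- 1\<^sub>m (2 ^ length ps) = (-1::real) \<cdot>\<^sub>m 1\<^sub>m (2 ^ length ps)"
    by (rule eq_matI) auto
  ultimately show False
    using assms by (cases s) (auto simp: sign_of_def)
qed

theorem proposition4p11:
  fixes n :: nat and P :: "real mat"
  assumes "n \<ge> 1"
    and "P \<in> pauli_group n"
    and "P * P = 1\<^sub>m (2^n)"
    and "P \<noteq> 1\<^sub>m (2^n)" and "P \<noteq> - 1\<^sub>m (2^n)"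
  shows "\<exists>!L. is_zcircuit n L \<and>
           conj_mat (zcirc_op n L) P = kron Zm (1\<^sub>m (2^(n-1)))"
proof -
  obtain s ps where ps: "length ps = n" "P = pauli_string_mat (s, ps)"
    using assms(2) by (rule pauli_group_elem)
  have "\<exists>x\<in>set ps. x \<noteq> PI" "even (count_list ps PY)"
    using assms(3-5) ps non_PI_if_not_scalar even_count_PY_if_square_one by blast+
  then have "\<exists>!L. is_zcircuit n L \<and> fold gate_act (zcirc_gates L) (s, ps) = target_string n"
    using ex1_zcircuit_reaching_target ps(1) by blast
  moreover have "is_zcircuit n L \<and> conj_mat (zcirc_op n L) P = kron Zm (1\<^sub>m (2^(n-1))) \<longleftrightarrow>
                 is_zcircuit n L \<and> fold gate_act (zcirc_gates L) (s, ps) = target_string n" for L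
    using conj_zcirc_op_eq_target_iff[of ps L s] ps kron_Zm_one_eq_target[of n] by auto
  ultimately show ?thesis by simp
qed

end
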